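(* Let $\Lambda$ be a left cancellative small category. Consider the conditions: (1) $\sim_1=\sim_2$ on $\mathcal Z*X$; (2) for every $v\in\Lambda^0$, every nonempty $E\in\mathcal A_v$, every $\alpha\in E$, and every invertible $\mu\in\Lambda$ with $r(\mu)=s(\mu)=s(\alpha)$ and $\mu\ne s(\alpha)$, there is $\beta\in s(\alpha)\Lambda$ such that $\alpha\beta\in E$ and either $\mu\beta\notin\beta\Lambda$ or $\mu^{-1}\beta\notin\beta\Lambda$. Then (2) implies (1). If moreover $\Lambda$ is right cancellative, then (1) implies (2).
   Context: A left cancellative small category (LCSC) is a small category $\Lambda$ such that $\alpha\beta=\alpha\gamma$ implies $\beta=\gamma$; right cancellative means $\beta\alpha=\gamma\alpha$ implies $\beta=\gamma$. Composition $\alpha\beta$ is defined when $s(\alpha)=r(\beta)$; $\Lambda^0$ is the set of objects (identity morphisms); $v\Lambda=\{\alpha:r(\alpha)=v\}$; $\alpha\Lambda=\{\alpha\beta:r(\beta)=s(\alpha)\}$. For $\alpha\in\Lambda$, $\tau^\alpha(\beta)=\alpha\beta$ on $s(\alpha)\Lambda$ and $\sigma^\alpha:\alpha\Lambda\to s(\alpha)\Lambda$ is its inverse. A zigzag is a tuple $\zeta=(\alpha_1,\beta_1,\dots,\alpha_n,\beta_n)$ with $r(\alpha_i)=r(\beta_i)$ and $s(\alpha_{i+1})=s(\beta_i)$; $\mathcal Z$ is the set of zigzags, $s(\zeta)=s(\beta_n)$, $r(\zeta)=s(\alpha_1)$, $\mathcal Zv=\{\zeta:s(\zeta)=v\}$,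 $\overline\zeta=(\beta_n,\alpha_n,\dots,\beta_1,\alpha_1)$. The zigzag map $\varphi_\zeta=\sigma^{\alpha_1}\circ\tau^{\beta_1}\circ\cdots\circ\sigma^{\alpha_n}\circ\tau^{\beta_n}$ (partial injective map) has domain $A(\zeta)\subseteq s(\zeta)\Lambda$ and range $A(\overline\zeta)$. $\mathcal D^{(0)}_v$ is the set of nonempty $A(\zeta)$, $\zeta\in\mathcal Zv$; $\mathcal A_v$ is the ring of subsets of $v\Lambda$ generated by $\mathcal D^{(0)}_v$. $X_v$ is the set of ultrafilters of $\mathcal A_v$ ($\mathcal U_x$ denoting the ultrafilter $x$), with compact open basic sets $\widehat E=\{x:E\in\mathcal U_x\}$; $X=\bigsqcup_vX_v$, $r(x)=v$ for $x\in X_v$. For $x\in\widehat{A(\zeta)}$, $\Phi_\zeta(x)$ is the ultrafilter of $\mathcal A_{r(\zeta)}$ generated by $\{\varphi_\zeta(E\cap A(\zeta)):E\in\mathcal U_x\}$; $\Phi_\zeta:\widehat{A(\zeta)}\to\widehat{A(\overline\zeta)}$ is a homeomorphism. On $\mathcal Z*X=\{(\zeta,x):s(\zeta)=r(x),\ x\in\widehat{A(\zeta)}\}$: $(\zeta,x)\sim_1(\zeta',x')$ iff $x=x'$ and $\Phi_\zeta|_{\widehat E}=\Phi_{\zeta'}|_{\widehat E}$ for some $E\in\mathcal U_x$; $(\zeta,x)\sim_2(\zeta',x')$ iff $x=x'$ and $\varphi_\zeta|_E=\varphi_{\zeta'}|_E$ for some $E\in\mathcal U_x$. *)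

theory Defs
  imports "HOL-Analysis.Sigma_Algebra"
begin

(* A small category with morphism set M; objects are identified with identity
   morphisms; r = range (codomain), s = source (domain); cmp a b = "a b" is
   defined (meaningful) when s a = r b. *)
definition small_category :: "'a set \<Rightarrow> ('a \<Rightarrow> 'a) \<Rightarrow> ('a \<Rightarrow> 'a) \<Rightarrow> ('a \<Rightarrow> 'a \<Rightarrow> 'a) \<Rightarrow> bool" where
  "small_category M r s cmp \<longleftrightarrow>
     (\<forall>a\<in>M. r a \<in> M \<and> s a \<in> M) \<and>
     (\<forall>a\<in>M. r (r a) = r a \<and> s (r a) = r a \<and> r (s a) = s a \<and> s (s a) = s a) \<and>
     (\<forall>a\<in>M. cmp (r a) a = a \<and> cmp a (s a) = a) \<and>
     (\<forall>a\<in>M. \<forall>b\<in>M. s a = r b \<longrightarrow> cmp a b \<in> M \<and> r (cmp a b) = r a \<and> s (cmp a b) = s b) \<and>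
     (\<forall>a\<in>M. \<forall>b\<in>M. \<forall>c\<in>M. s a = r b \<longrightarrow> s b = r c \<longrightarrow> cmp (cmp a b) c = cmp a (cmp b c))"

definition left_cancellative :: "'a set \<Rightarrow> ('a \<Rightarrow> 'a) \<Rightarrow> ('a \<Rightarrow> 'a) \<Rightarrow> ('a \<Rightarrow> 'a \<Rightarrow> 'a) \<Rightarrow> bool" where
  "left_cancellative M r s cmp \<longleftrightarrow>
     (\<forall>a\<in>M. \<forall>b\<in>M. \<forall>c\<in>M. s a = r b \<longrightarrow> s a = r c \<longrightarrow> cmp a b = cmp a c \<longrightarrow> b = c)"

definition right_cancellative :: "'a set \<Rightarrow> ('a \<Rightarrow> 'a) \<Rightarrow> ('a \<Rightarrow> 'a) \<Rightarrow> ('a \<Rightarrow> 'a \<Rightarrow> 'a) \<Rightarrow> bool" where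
  "right_cancellative M r s cmp \<longleftrightarrow>
     (\<forall>a\<in>M. \<forall>b\<in>M. \<forall>c\<in>M. s b = r a \<longrightarrow> s c = r a \<longrightarrow> cmp b a = cmp c a \<longrightarrow> b = c)"

definition objects :: "'a set \<Rightarrow> ('a \<Rightarrow> 'a) \<Rightarrow> 'a set" where
  "objects M r = {v\<in>M. r v = v}"

definition rangeset :: "'a set \<Rightarrow> ('a \<Rightarrow> 'a) \<Rightarrow> 'a \<Rightarrow> 'a set" where
  "rangeset M r v = {a\<in>M. r a = v}"

definition rightideal :: "'a set \<Rightarrow> ('a \<Rightarrow> 'a) \<Rightarrow> ('a \<Rightarrow> 'a) \<Rightarrow> ('a \<Rightarrow> 'a \<Rightarrow> 'a) \<Rightarrow> 'a \<Rightarrow> 'a set" where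
  "rightideal M r s cmp a = {cmp a b | b. b \<in> M \<and> r b = s a}"

definition tau_map :: "'a set \<Rightarrow> ('a \<Rightarrow> 'a) \<Rightarrow> ('a \<Rightarrow> 'a) \<Rightarrow> ('a \<Rightarrow> 'a \<Rightarrow> 'a) \<Rightarrow> 'a \<Rightarrow> 'a \<Rightarrow> 'a option" where
  "tau_map M r s cmp b x = (if x \<in> M \<and> r x = s b then Some (cmp b x) else None)"

definition sigma_map :: "'a set \<Rightarrow> ('a \<Rightarrow> 'a) \<Rightarrow> ('a \<Rightarrow> 'a) \<Rightarrow> ('a \<Rightarrow> 'a \<Rightarrow> 'a) \<Rightarrow> 'a \<Rightarrow> 'a \<Rightarrow> 'a option" where
  "sigma_map M r s cmp a y =
     (if \<exists>x. x \<in> M \<and> r x = s a \<and> cmp a x = y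
      then Some (THE x. x \<in> M \<and> r x = s a \<and> cmp a x = y) else None)"

(* A zigzag (alpha_1,beta_1,...,alpha_n,beta_n), n >= 1, is represented as the
   list [(alpha_1,beta_1),...,(alpha_n,beta_n)]. *)
fun zz_chain :: "('a \<Rightarrow> 'a) \<Rightarrow> ('a \<times> 'a) list \<Rightarrow> bool" where
  "zz_chain s [] = True"
| "zz_chain s [p] = True"
| "zz_chain s (p # q # rest) = (s (fst q) = s (snd p) \<and> zz_chain s (q # rest))"

definition is_zigzag :: "'a set \<Rightarrow> ('a \<Rightarrow> 'a) \<Rightarrow> ('a \<Rightarrow> 'a) \<Rightarrow> ('a \<times> 'a) list \<Rightarrow> bool" where
  "is_zigzag M r s z \<longleftrightarrow> z \<noteq> [] \<and>
     (\<forall>(a, b)\<in>set z. a \<in> M \<and> b \<in> M \<and> r a = r b) \<and> zz_chain s z"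

definition zz_source :: "('a \<Rightarrow> 'a) \<Rightarrow> ('a \<times> 'a) list \<Rightarrow> 'a" where
  "zz_source s z = s (snd (last z))"

definition zz_range :: "('a \<Rightarrow> 'a) \<Rightarrow> ('a \<times> 'a) list \<Rightarrow> 'a" where
  "zz_range s z = s (fst (hd z))"

(* zigzag map phi_zeta = sigma^{alpha_1} o tau^{beta_1} o ... o sigma^{alpha_n} o tau^{beta_n} *)
fun zz_map :: "'a set \<Rightarrow> ('a \<Rightarrow> 'a) \<Rightarrow> ('a \<Rightarrow> 'a) \<Rightarrow> ('a \<Rightarrow> 'a \<Rightarrow> 'a) \<Rightarrow> ('a \<times> 'a) list \<Rightarrow> 'a \<Rightarrow> 'a option" where
  "zz_map M r s cmp [] x = Some x"
| "zz_map M r s cmp ((a, b) # rest) x =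
     Option.bind (Option.bind (zz_map M r s cmp rest x) (tau_map M r s cmp b)) (sigma_map M r s cmp a)"

definition zz_dom :: "'a set \<Rightarrow> ('a \<Rightarrow> 'a) \<Rightarrow> ('a \<Rightarrow> 'a) \<Rightarrow> ('a \<Rightarrow> 'a \<Rightarrow> 'a) \<Rightarrow> ('a \<times> 'a) list \<Rightarrow> 'a set" where
  "zz_dom M r s cmp z = dom (zz_map M r s cmp z)"

definition D0 :: "'a set \<Rightarrow> ('a \<Rightarrow> 'a) \<Rightarrow> ('a \<Rightarrow> 'a) \<Rightarrow> ('a \<Rightarrow> 'a \<Rightarrow> 'a) \<Rightarrow> 'a \<Rightarrow> 'a set set" where
  "D0 M r s cmp v = {zz_dom M r s cmp z | z. is_zigzag M r s z \<and> zz_source s z = v \<and> zz_dom M r s cmp z \<noteq> {}}"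

definition Aring :: "'a set \<Rightarrow> ('a \<Rightarrow> 'a) \<Rightarrow> ('a \<Rightarrow> 'a) \<Rightarrow> ('a \<Rightarrow> 'a \<Rightarrow> 'a) \<Rightarrow> 'a \<Rightarrow> 'a set set" where
  "Aring M r s cmp v = \<Inter>{R. ring_of_sets (rangeset M r v) R \<and> D0 M r s cmp v \<subseteq> R}"

definition is_filter_in :: "'b set set \<Rightarrow> 'b set set \<Rightarrow> bool" where
  "is_filter_in R U \<longleftrightarrow> U \<subseteq> R \<and> U \<noteq> {} \<and> {} \<notin> U \<and>
     (\<forall>E\<in>U. \<forall>F\<in>U. E \<inter> F \<in> U) \<and> (\<forall>E\<in>U. \<forall>F\<in>R. E \<subseteq> F \<longrightarrow> F \<in> U)"

definition is_ultrafilter_in :: "'b set set \<Rightarrow> 'b set set \<Rightarrow> bool" where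
  "is_ultrafilter_in R U \<longleftrightarrow> is_filter_in R U \<and> (\<forall>U'. is_filter_in R U' \<and> U \<subseteq> U' \<longrightarrow> U' = U)"

definition Xspace :: "'a set \<Rightarrow> ('a \<Rightarrow> 'a) \<Rightarrow> ('a \<Rightarrow> 'a) \<Rightarrow> ('a \<Rightarrow> 'a \<Rightarrow> 'a) \<Rightarrow> ('a \<times> 'a set set) set" where
  "Xspace M r s cmp = {(v, U). v \<in> objects M r \<and> is_ultrafilter_in (Aring M r s cmp v) U}"

definition Phi :: "'a set \<Rightarrow> ('a \<Rightarrow> 'a) \<Rightarrow> ('a \<Rightarrow> 'a) \<Rightarrow> ('a \<Rightarrow> 'a \<Rightarrow> 'a) \<Rightarrow> ('a \<times> 'a) list \<Rightarrow> 'a set set \<Rightarrow> 'a set set" where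
  "Phi M r s cmp z U =
     {F \<in> Aring M r s cmp (zz_range s z).
        \<exists>E\<in>U. {y. \<exists>x\<in>E \<inter> zz_dom M r s cmp z. zz_map M r s cmp z x = Some y} \<subseteq> F}"

definition ZX :: "'a set \<Rightarrow> ('a \<Rightarrow> 'a) \<Rightarrow> ('a \<Rightarrow> 'a) \<Rightarrow> ('a \<Rightarrow> 'a \<Rightarrow> 'a) \<Rightarrow> (('a \<times> 'a) list \<times> ('a \<times> 'a set set)) set" where
  "ZX M r s cmp = {(z, (v, U)). is_zigzag M r s z \<and> (v, U) \<in> Xspace M r s cmp \<and>
                      zz_source s z = v \<and> zz_dom M r s cmp z \<in> U}"

definition sim1 :: "'a set \<Rightarrow> ('a \<Rightarrow> 'a) \<Rightarrow> ('a \<Rightarrow> 'a) \<Rightarrow> ('a \<Rightarrow> 'a \<Rightarrow> 'a) \<Rightarrow>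
    (('a \<times> 'a) list \<times> ('a \<times> 'a set set)) \<Rightarrow> (('a \<times> 'a) list \<times> ('a \<times> 'a set set)) \<Rightarrow> bool" where
  "sim1 M r s cmp p q \<longleftrightarrow> (case p of (z, (v, U)) \<Rightarrow> case q of (z', x') \<Rightarrow>
     x' = (v, U) \<and>
     (\<exists>E\<in>U. E \<subseteq> zz_dom M r s cmp z \<inter> zz_dom M r s cmp z' \<and>
        (\<forall>W. is_ultrafilter_in (Aring M r s cmp v) W \<and> E \<in> W \<longrightarrow>
              Phi M r s cmp z W = Phi M r s cmp z' W)))"

definition sim2 :: "'a set \<Rightarrow> ('a \<Rightarrow> 'a) \<Rightarrow> ('a \<Rightarrow> 'a) \<Rightarrow> ('a \<Rightarrow> 'a \<Rightarrow> 'a) \<Rightarrow>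
    (('a \<times> 'a) list \<times> ('a \<times> 'a set set)) \<Rightarrow> (('a \<times> 'a) list \<times> ('a \<times> 'a set set)) \<Rightarrow> bool" where
  "sim2 M r s cmp p q \<longleftrightarrow> (case p of (z, (v, U)) \<Rightarrow> case q of (z', x') \<Rightarrow>
     x' = (v, U) \<and>
     (\<exists>E\<in>U. E \<subseteq> zz_dom M r s cmp z \<inter> zz_dom M r s cmp z' \<and>
        (\<forall>a\<in>E. zz_map M r s cmp z a = zz_map M r s cmp z' a)))"

end

theory Submission
  imports Defs
begin

text \<open>
  Sets of \<open>\<A>\<^sub>v\<close> are invariant under right multiplication by units, because domains of
  zigzag maps are right ideals, and zigzag maps commute with right multiplication.

  (2) \<open>\<Longrightarrow>\<close> (1): if \<open>\<Phi>\<^sub>\<zeta>\<close> and \<open>\<Phi>\<^sub>\<zeta>'\<close> agree near \<open>x\<close>, testing them on principal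
  ultrafilters shows that at each \<open>y\<close> near \<open>x\<close> the values \<open>\<phi>\<^sub>\<zeta>(y)\<close> and \<open>\<phi>\<^sub>\<zeta>'(y)\<close> generate the
  same principal right ideal, hence differ by a unit \<open>\<gamma>\<close> at \<open>s(y)\<close>. Applying the same
  argument at the points \<open>y\<beta>\<close> shows that \<open>\<gamma>\<close> and \<open>\<gamma>\<^sup>-\<^sup>1\<close> map \<open>\<beta>\<close> into \<open>\<beta>\<Lambda>\<close> whenever
  \<open>y\<beta>\<close> is near \<open>x\<close>, so (2) forces \<open>\<gamma>\<close> to be trivial.

  (1) \<open>\<Longrightarrow>\<close> (2): if a nontrivial unit \<open>\<mu>\<close> maps every \<open>\<beta>\<close> with \<open>\<alpha>\<beta> \<in> E\<close> into \<open>\<beta>\<Lambda>\<close>, and so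
  does its inverse, then the zigzag map \<open>\<alpha>\<beta> \<mapsto> \<alpha>\<mu>\<beta>\<close> acts on \<open>E \<inter> \<alpha>\<Lambda>\<close> by right
  multiplication with units. Its \<open>\<Phi>\<close> is therefore the identity near the principal ultrafilter
  at \<open>\<alpha>\<close>, although the map itself differs from the identity at \<open>\<alpha>\<close>.
\<close>

lemma principal_ultrafilter:
  assumes "ring_of_sets \<Omega> R" "F\<^sub>0 \<in> R" "y \<in> F\<^sub>0"
  shows "is_ultrafilter_in R {F \<in> R. y \<in> F}"
proof -
  interpret ring_of_sets \<Omega> R by fact
  let ?U = "{F \<in> R. y \<in> F}"
  have filter: "is_filter_in R ?U"
    using assms by (auto simp: is_filter_in_def)
  have "U' \<subseteq> ?U" if U': "is_filter_in R U'" "?U \<subseteq> U'" for U'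
  proof
    fix F assume F: "F \<in> U'"
    then have "F \<in> R" using U' by (auto simp: is_filter_in_def)
    show "F \<in> ?U"
    proof (rule ccontr)
      assume "F \<notin> ?U"
      with \<open>F \<in> R\<close> assms(2,3) U' have "F\<^sub>0 - F \<in> U'" by auto
      with F U'(1) have "F \<inter> (F\<^sub>0 - F) \<in> U'" unfolding is_filter_in_def by blast
      moreover have "F \<inter> (F\<^sub>0 - F) = {}" by blast
      ultimately show False using U'(1) by (auto simp: is_filter_in_def)
    qed
  qed
  with filter show ?thesis by (auto simp: is_ultrafilter_in_def)
qed

lemma ultrafilter_memberD:
  assumes "is_ultrafilter_in R U" "E \<in> U"
  shows "E \<in> R" "E \<noteq> {}"
  using assms(2) conjunct1[OF assms(1)[unfolded is_ultrafilter_in_def]]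
  unfolding is_filter_in_def by auto

(* zigzag maps are unfolded through zz_map_Cons_eq_Some instead *)
declare zz_map.simps(2) [simp del]

locale left_cancellative_category =
  fixes M :: "'a set" and r s :: "'a \<Rightarrow> 'a" and cmp :: "'a \<Rightarrow> 'a \<Rightarrow> 'a"
  assumes category: "small_category M r s cmp"
    and left_cancel: "left_cancellative M r s cmp"
begin

abbreviation "zmap \<equiv> zz_map M r s cmp"
abbreviation "zdom \<equiv> zz_dom M r s cmp"
abbreviation "ideal \<equiv> rightideal M r s cmp"
abbreviation "ringA \<equiv> Aring M r s cmp"
abbreviation "\<Phi> \<equiv> Phi M r s cmp"

lemma r_in [simp]: "a \<in> M \<Longrightarrow> r a \<in> M"
  and s_in [simp]: "a \<in> M \<Longrightarrow> s a \<in> M"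
  and r_r [simp]: "a \<in> M \<Longrightarrow> r (r a) = r a"
  and s_r [simp]: "a \<in> M \<Longrightarrow> s (r a) = r a"
  and r_s [simp]: "a \<in> M \<Longrightarrow> r (s a) = s a"
  and s_s [simp]: "a \<in> M \<Longrightarrow> s (s a) = s a"
  and comp_r_left [simp]: "a \<in> M \<Longrightarrow> cmp (r a) a = a"
  and comp_s_right [simp]: "a \<in> M \<Longrightarrow> cmp a (s a) = a"
  and comp_in [simp]: "a \<in> M \<Longrightarrow> b \<in> M \<Longrightarrow> r b = s a \<Longrightarrow> cmp a b \<in> M"
  and r_comp [simp]: "a \<in> M \<Longrightarrow> b \<in> M \<Longrightarrow> r b = s a \<Longrightarrow> r (cmp a b) = r a"
  and s_comp [simp]: "a \<in> M \<Longrightarrow> b \<in> M \<Longrightarrow> r b = s a \<Longrightarrow> s (cmp a b) = s b"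
  using category unfolding small_category_def by metis+

lemma comp_assoc:
  "\<lbrakk>a \<in> M; b \<in> M; c \<in> M; r b = s a; r c = s b\<rbrakk> \<Longrightarrow> cmp (cmp a b) c = cmp a (cmp b c)"
  using category unfolding small_category_def by metis

lemma comp_cancel_left [simp]:
  "\<lbrakk>a \<in> M; b \<in> M; c \<in> M; r b = s a; r c = s a\<rbrakk> \<Longrightarrow> cmp a b = cmp a c \<longleftrightarrow> b = c"
  using left_cancel unfolding left_cancellative_def by metis

lemma comp_eq_self_imp_identity: "\<lbrakk>a \<in> M; c \<in> M; r c = s a; cmp a c = a\<rbrakk> \<Longrightarrow> c = s a"
  using comp_cancel_left[of a c "s a"] by simp

lemma comp_identity_left: "\<lbrakk>y \<in> M; r y = v\<rbrakk> \<Longrightarrow> cmp v y = y"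
  by auto

lemma rightideal_associatedE:
  assumes "a \<in> M" "b \<in> M" "s a = s b" "b \<in> ideal a" "a \<in> ideal b"
  obtains \<gamma> \<delta> where "\<gamma> \<in> M" "\<delta> \<in> M" "b = cmp a \<gamma>" "a = cmp b \<delta>"
    "r \<gamma> = s a" "s \<gamma> = s a" "r \<delta> = s a" "s \<delta> = s a" "cmp \<gamma> \<delta> = s a" "cmp \<delta> \<gamma> = s a"
proof -
  obtain \<gamma> where \<gamma>: "b = cmp a \<gamma>" "\<gamma> \<in> M" "r \<gamma> = s a"
    using assms(4) by (auto simp: rightideal_def)
  obtain \<delta> where \<delta>: "a = cmp b \<delta>" "\<delta> \<in> M" "r \<delta> = s a"
    using assms(3,5) by (auto simp: rightideal_def)
  have s\<gamma>: "s \<gamma> = s a"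
    using s_comp[OF assms(1) \<gamma>(2,3)] \<gamma>(1) assms(3) by simp
  have s\<delta>: "s \<delta> = s a"
    using s_comp[OF assms(2) \<delta>(2)] \<delta>(1,3) assms(3) by simp
  have "cmp \<gamma> \<delta> = s a"
  proof -
    have "cmp a (cmp \<gamma> \<delta>) = cmp (cmp a \<gamma>) \<delta>"
      using comp_assoc[OF assms(1) \<gamma>(2) \<delta>(2)] \<gamma>(3) \<delta>(3) s\<gamma> by simp
    also have "\<dots> = a" by (simp add: \<gamma>(1)[symmetric] \<delta>(1)[symmetric])
    finally show ?thesis
      using comp_eq_self_imp_identity[OF assms(1), of "cmp \<gamma> \<delta>"] \<gamma>(2,3) \<delta>(2,3) s\<gamma> by simp
  qed
  moreover have "cmp \<delta> \<gamma> = s a"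
  proof -
    have "cmp b (cmp \<delta> \<gamma>) = cmp (cmp b \<delta>) \<gamma>"
      using comp_assoc[OF assms(2) \<delta>(2) \<gamma>(2)] \<gamma>(3) \<delta>(3) s\<delta> assms(3) by simp
    also have "\<dots> = b" by (simp add: \<gamma>(1)[symmetric] \<delta>(1)[symmetric])
    finally show ?thesis
      using comp_eq_self_imp_identity[OF assms(2), of "cmp \<delta> \<gamma>"] \<gamma>(2,3) \<delta>(2,3) s\<delta> assms(3)
      by simp
  qed
  ultimately show thesis
    by (rule that[OF \<gamma>(2) \<delta>(2) \<gamma>(1) \<delta>(1) \<gamma>(3) s\<gamma> \<delta>(3) s\<delta>])
qed

lemma rightideal_cancel_left:
  assumes "a \<in> M" "\<gamma> \<in> M" "\<beta> \<in> M" "r \<gamma> = s a" "s \<gamma> = s a" "r \<beta> = s a"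
    and "cmp (cmp a \<gamma>) \<beta> \<in> ideal (cmp a \<beta>)"
  shows "cmp \<gamma> \<beta> \<in> ideal \<beta>"
proof -
  obtain g where g: "cmp (cmp a \<gamma>) \<beta> = cmp (cmp a \<beta>) g" "g \<in> M" "r g = s \<beta>"
    using assms by (auto simp: rightideal_def)
  then have "cmp a (cmp \<gamma> \<beta>) = cmp a (cmp \<beta> g)"
    using assms(1-6) by (simp add: comp_assoc)
  then have "cmp \<gamma> \<beta> = cmp \<beta> g"
    using assms(1-6) g(2,3) by simp
  with g(2,3) show ?thesis by (auto simp: rightideal_def)
qed

section \<open>Zigzag maps\<close>

lemma tau_map_eq_Some: "tau_map M r s cmp b x = Some t \<longleftrightarrow> x \<in> M \<and> r x = s b \<and> t = cmp b x"
  by (auto simp: tau_map_def)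

lemma sigma_map_eq_Some:
  assumes "a \<in> M"
  shows "sigma_map M r s cmp a t = Some u \<longleftrightarrow> u \<in> M \<and> r u = s a \<and> cmp a u = t"
proof -
  have "(THE x. x \<in> M \<and> r x = s a \<and> cmp a x = t) = u" if "u \<in> M \<and> r u = s a \<and> cmp a u = t" for u
    using that assms by (intro the_equality) auto
  then show ?thesis by (auto simp: sigma_map_def)
qed

lemma zz_map_Cons_eq_Some:
  "a \<in> M \<Longrightarrow> zmap ((a, b) # z) x = Some y \<longleftrightarrow>
    (\<exists>t. zmap z x = Some t \<and> t \<in> M \<and> r t = s b \<and> y \<in> M \<and> r y = s a \<and> cmp a y = cmp b t)"
  by (auto simp: zz_map.simps bind_eq_Some_conv tau_map_eq_Some sigma_map_eq_Some)

lemma s_zz_map: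
  assumes "zmap z x = Some y" "set z \<subseteq> M \<times> M"
  shows "s y = s x"
  using assms
proof (induction z arbitrary: y)
  case (Cons p z)
  obtain a b where p: "p = (a, b)" by force
  with Cons.prems obtain t where t: "zmap z x = Some t" "t \<in> M" "r t = s b" "y \<in> M" "r y = s a"
    "cmp a y = cmp b t" "a \<in> M" "b \<in> M"
    by (auto simp: zz_map_Cons_eq_Some)
  then have "s y = s t" by (metis s_comp)
  with t(1) Cons show ?case by auto
qed simp

lemma zz_map_SomeD:
  assumes "zmap z x = Some y" "set z \<subseteq> M \<times> M" "z \<noteq> []"
  shows "x \<in> M \<and> r x = s (snd (last z)) \<and> y \<in> M \<and> r y = s (fst (hd z))"
  using assms(3,1,2)
proof (induction z arbitrary: y rule: list_nonempty_induct)
  case (single p)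
  then show ?case by (cases p) (auto simp: zz_map_Cons_eq_Some)
next
  case (cons p z)
  obtain a b where p: "p = (a, b)" by force
  with cons.prems obtain t where "zmap z x = Some t" "y \<in> M" "r y = s a"
    by (auto simp: zz_map_Cons_eq_Some)
  with cons p show ?case by auto
qed

lemma zz_map_comp_right:
  assumes "zmap z x = Some y" "set z \<subseteq> M \<times> M" "x \<in> M" "g \<in> M" "r g = s x"
  shows "zmap z (cmp x g) = Some (cmp y g)"
  using assms(1,2)
proof (induction z arbitrary: y)
  case (Cons p z)
  obtain a b where p: "p = (a, b)" by force
  with Cons.prems obtain t where t: "zmap z x = Some t" "t \<in> M" "r t = s b" "y \<in> M" "r y = s a"
    "cmp a y = cmp b t" "a \<in> M" "b \<in> M"
    by (auto simp: zz_map_Cons_eq_Some)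
  have "s t = s x" "s y = s x"
    using s_zz_map Cons.prems t(1) p by auto
  then have "cmp a (cmp y g) = cmp b (cmp t g)"
    using t assms(4,5) by (metis comp_assoc)
  with Cons t p assms(4,5) \<open>s t = s x\<close> \<open>s y = s x\<close> show ?case
    by (auto simp: zz_map_Cons_eq_Some)
qed (use assms in simp)

lemma zigzag_subset: "is_zigzag M r s z \<Longrightarrow> set z \<subseteq> M \<times> M"
  by (auto simp: is_zigzag_def)

lemma zigzag_zz_domE:
  assumes "is_zigzag M r s z" "x \<in> zdom z"
  obtains y where "zmap z x = Some y" "x \<in> M" "r x = zz_source s z" "y \<in> M"
    "r y = zz_range s z" "s y = s x"
proof -
  obtain y where y: "zmap z x = Some y" using assms(2) by (auto simp: zz_dom_def)
  moreover have "z \<noteq> []" using assms(1) by (simp add: is_zigzag_def)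
  ultimately show thesis
    using that zz_map_SomeD[OF y] s_zz_map[OF y] zigzag_subset[OF assms(1)]
    by (auto simp: zz_source_def zz_range_def)
qed

lemma zz_dom_subset_rangeset: "is_zigzag M r s z \<Longrightarrow> zdom z \<subseteq> rangeset M r (zz_source s z)"
  by (auto simp: rangeset_def elim: zigzag_zz_domE)

lemma zz_dom_comp_right:
  assumes "is_zigzag M r s z" "x \<in> zdom z" "g \<in> M" "r g = s x"
  shows "cmp x g \<in> zdom z"
proof -
  obtain y where "zmap z x = Some y" "x \<in> M"
    using assms(1,2) by (rule zigzag_zz_domE)
  then show ?thesis
    using zz_map_comp_right[OF _ zigzag_subset[OF assms(1)]] assms(3,4) by (auto simp: zz_dom_def)
qed

lemma zz_map_rightideal:
  assumes "is_zigzag M r s z" "zmap z y = Some a" "y \<in> M" "x \<in> ideal y" "zmap z x = Some c"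
  shows "c \<in> ideal a"
proof -
  obtain g where g: "x = cmp y g" "g \<in> M" "r g = s y"
    using assms(4) by (auto simp: rightideal_def)
  then have "c = cmp a g"
    using zz_map_comp_right[OF assms(2) zigzag_subset[OF assms(1)] assms(3)] assms(5) by simp
  moreover have "a \<in> M" "s a = s y"
    using assms(1,2) by (auto elim!: zigzag_zz_domE simp: zz_dom_def)
  ultimately show ?thesis using g by (auto simp: rightideal_def)
qed

section \<open>The rings \<open>\<A>\<^sub>v\<close>\<close>

lemma ring_of_sets_Aring: "ring_of_sets (rangeset M r v) (ringA v)"
proof -
  let ?C = "{R. ring_of_sets (rangeset M r v) R \<and> D0 M r s cmp v \<subseteq> R}"
  have "Pow (rangeset M r v) \<in> ?C"
    using zz_dom_subset_rangeset by (auto simp: ring_of_sets_Pow D0_def)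
  then have "ring_of_sets (rangeset M r v) (\<Inter>?C)"
    by (intro ring_of_setsI) (auto simp: ring_of_sets_iff)
  then show ?thesis by (simp add: Aring_def)
qed

lemma Aring_least: "\<lbrakk>ring_of_sets (rangeset M r v) R; D0 M r s cmp v \<subseteq> R\<rbrakk> \<Longrightarrow> ringA v \<subseteq> R"
  by (auto simp: Aring_def)

lemma Aring_subset_rangeset: "F \<in> ringA v \<Longrightarrow> F \<subseteq> rangeset M r v"
  using ring_of_sets_Aring[of v] unfolding ring_of_sets_iff by blast

lemma Aring_Int: "\<lbrakk>F \<in> ringA v; G \<in> ringA v\<rbrakk> \<Longrightarrow> F \<inter> G \<in> ringA v"
  by (metis Diff_Diff_Int ring_of_sets.Diff ring_of_sets_Aring)

lemma zz_dom_in_Aring: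
  assumes "is_zigzag M r s z"
  shows "zdom z \<in> ringA (zz_source s z)"
proof (cases "zdom z = {}")
  case True
  then show ?thesis using ring_of_sets_Aring unfolding ring_of_sets_iff by simp
next
  case False
  with assms show ?thesis by (auto simp: Aring_def D0_def)
qed

lemma self_in_rightideal: "a \<in> M \<Longrightarrow> a \<in> ideal a"
  unfolding rightideal_def by (intro CollectI exI[of _ "s a"]) simp

lemma rightideal_in_Aring:
  assumes "a \<in> M"
  shows "ideal a \<in> ringA (r a)"
proof -
  \<comment> \<open>\<open>a\<Lambda>\<close> is the domain of \<open>\<sigma>\<^sup>a\<close>, the zigzag map of \<open>(a, r a)\<close>\<close>
  have "is_zigzag M r s [(a, r a)]" and "zz_source s [(a, r a)] = r a"
    using assms by (simp_all add: is_zigzag_def zz_source_def)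
  moreover have "zdom [(a, r a)] = ideal a"
  proof -
    have "zmap [(a, r a)] x = Some y \<longleftrightarrow> x \<in> M \<and> r x = r a \<and> y \<in> M \<and> r y = s a \<and> cmp a y = x"
      for x y
      using assms by (auto simp: zz_map_Cons_eq_Some comp_identity_left)
    with assms show ?thesis by (auto simp: zz_dom_def rightideal_def)
  qed
  ultimately show ?thesis using zz_dom_in_Aring by metis
qed

lemma Aring_comp_right_invertible_iff:
  assumes "F \<in> ringA v" "x \<in> M" "\<gamma> \<in> M" "\<delta> \<in> M" "r \<gamma> = s x" "r \<delta> = s \<gamma>" "cmp \<gamma> \<delta> = s x"
  shows "cmp x \<gamma> \<in> F \<longleftrightarrow> x \<in> F"
proof -
  define stable where "stable F \<longleftrightarrow> (\<forall>x \<gamma> \<delta>. x \<in> M \<and> \<gamma> \<in> M \<and> \<delta> \<in> M \<and>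
      r \<gamma> = s x \<and> r \<delta> = s \<gamma> \<and> cmp \<gamma> \<delta> = s x \<longrightarrow> (cmp x \<gamma> \<in> F \<longleftrightarrow> x \<in> F))" for F
  let ?R = "{F \<in> Pow (rangeset M r v). stable F}"
  have "ring_of_sets (rangeset M r v) ?R"
  proof (rule ring_of_setsI)
    fix a b assume "a \<in> ?R" "b \<in> ?R"
    then show "a \<union> b \<in> ?R" "a - b \<in> ?R" unfolding stable_def by blast+
  qed (auto simp: stable_def)
  moreover have "D0 M r s cmp v \<subseteq> ?R"
  proof
    fix D assume "D \<in> D0 M r s cmp v"
    then obtain z where z: "is_zigzag M r s z" "zz_source s z = v" "D = zdom z"
      by (auto simp: D0_def)
    have "stable D"
      unfolding stable_def
    proof (intro allI impI)
      fix x \<gamma> \<delta>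
      assume h: "x \<in> M \<and> \<gamma> \<in> M \<and> \<delta> \<in> M \<and> r \<gamma> = s x \<and> r \<delta> = s \<gamma> \<and> cmp \<gamma> \<delta> = s x"
      \<comment> \<open>domains of zigzag maps are right ideals, and \<open>(x\<gamma>)\<delta> = x\<close>\<close>
      then have "cmp (cmp x \<gamma>) \<delta> = x" by (simp add: comp_assoc)
      then show "cmp x \<gamma> \<in> D \<longleftrightarrow> x \<in> D"
        using zz_dom_comp_right[OF z(1), of x \<gamma>] zz_dom_comp_right[OF z(1), of "cmp x \<gamma>" \<delta>] h z(3)
        by auto
    qed
    then show "D \<in> ?R" using z zz_dom_subset_rangeset by auto
  qed
  ultimately have "stable F" using Aring_least assms(1) by blast
  then show ?thesis using assms(2-7) unfolding stable_def by metis
qed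

section \<open>Germs of \<open>\<Phi>\<^sub>\<zeta>\<close> and germs of \<open>\<phi>\<^sub>\<zeta>\<close>\<close>

lemma Phi_subset_if_zz_map_agree:
  assumes "zz_range s z = zz_range s z'" "is_filter_in (ringA v) W" "E \<in> W"
    "E \<subseteq> zdom z \<inter> zdom z'" "\<forall>x\<in>E. zmap z x = zmap z' x"
  shows "\<Phi> z W \<subseteq> \<Phi> z' W"
proof
  fix F assume "F \<in> \<Phi> z W"
  then obtain E' where F: "F \<in> ringA (zz_range s z')" "E' \<in> W"
     "{y. \<exists>x\<in>E' \<inter> zdom z. zmap z x = Some y} \<subseteq> F"
    using assms(1) unfolding Phi_def by auto
  have "E' \<inter> E \<in> W" using assms(2,3) F(2) by (auto simp: is_filter_in_def)
  moreover have "{y. \<exists>x\<in>(E' \<inter> E) \<inter> zdom z'. zmap z' x = Some y} \<subseteq> F"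
  proof
    fix y assume "y \<in> {y. \<exists>x\<in>(E' \<inter> E) \<inter> zdom z'. zmap z' x = Some y}"
    then obtain x where x: "x \<in> E'" "x \<in> E" "zmap z' x = Some y" by blast
    with assms(4,5) have "zmap z x = Some y" "x \<in> zdom z" by auto
    with F(3) x(1) show "y \<in> F" by blast
  qed
  ultimately show "F \<in> \<Phi> z' W" using F(1) unfolding Phi_def by blast
qed

lemma Phi_eq_self_if_membership_preserved:
  assumes "zz_range s z = v" "is_filter_in (ringA v) W" "E\<^sub>0 \<in> W" "E\<^sub>0 \<subseteq> zdom z"
    and preserved: "\<And>x y F. \<lbrakk>x \<in> E\<^sub>0; zmap z x = Some y; F \<in> ringA v\<rbrakk> \<Longrightarrow> y \<in> F \<longleftrightarrow> x \<in> F"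
  shows "\<Phi> z W = W"
proof
  show "\<Phi> z W \<subseteq> W"
  proof
    fix F assume "F \<in> \<Phi> z W"
    then obtain E' where F: "F \<in> ringA v" "E' \<in> W" "{y. \<exists>x\<in>E' \<inter> zdom z. zmap z x = Some y} \<subseteq> F"
      using assms(1) unfolding Phi_def by auto
    have "E' \<inter> E\<^sub>0 \<subseteq> F"
    proof
      fix x assume x: "x \<in> E' \<inter> E\<^sub>0"
      then obtain y where "zmap z x = Some y" using assms(4) by (auto simp: zz_dom_def)
      with F x assms(4) preserved show "x \<in> F" by blast
    qed
    moreover have "E' \<inter> E\<^sub>0 \<in> W" using assms(2,3) F(2) by (auto simp: is_filter_in_def)
    ultimately show "F \<in> W" using assms(2) F(1) by (auto simp: is_filter_in_def)
  qed
  show "W \<subseteq> \<Phi> z W"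
  proof
    fix F assume F: "F \<in> W"
    then have "F \<in> ringA v" "F \<inter> E\<^sub>0 \<in> W" using assms(2,3) by (auto simp: is_filter_in_def)
    moreover have "{y. \<exists>x\<in>(F \<inter> E\<^sub>0) \<inter> zdom z. zmap z x = Some y} \<subseteq> F"
      using preserved \<open>F \<in> ringA v\<close> by blast
    ultimately show "F \<in> \<Phi> z W" using assms(1) unfolding Phi_def by blast
  qed
qed

lemma zz_map_in_rightideal_if_Phi_agree:
  assumes z: "is_zigzag M r s z" "zz_source s z = v"
    and E: "E \<in> ringA v" "E \<subseteq> zdom z \<inter> zdom z'"
    and agree: "\<forall>W. is_ultrafilter_in (ringA v) W \<and> E \<in> W \<longrightarrow> \<Phi> z W = \<Phi> z' W"
    and y: "y \<in> E" "zmap z y = Some a" "zmap z' y = Some b"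
  shows "b \<in> ideal a"
proof -
  \<comment> \<open>test the agreement on the principal ultrafilter at \<open>y\<close>: it contains \<open>y\<Lambda>\<close>, which
      \<open>\<phi>\<^sub>z\<close> maps into \<open>a\<Lambda>\<close>\<close>
  let ?W = "{F \<in> ringA v. y \<in> F}"
  obtain a' where "zmap z y = Some a'" "y \<in> M" "r y = v" "a' \<in> M" "r a' = zz_range s z"
    using zigzag_zz_domE[OF z(1)] y(1) E(2) z(2) by blast
  with y(2) have yM: "y \<in> M" "r y = v" and aM: "a \<in> M" "r a = zz_range s z" by auto
  have W: "is_ultrafilter_in (ringA v) ?W"
    using principal_ultrafilter[OF ring_of_sets_Aring E(1) y(1)] .
  have "ideal y \<in> ?W"
    using rightideal_in_Aring[OF yM(1)] self_in_rightideal[OF yM(1)] yM(2) by simp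
  moreover have "{c. \<exists>x\<in>ideal y \<inter> zdom z. zmap z x = Some c} \<subseteq> ideal a"
    using zz_map_rightideal[OF z(1) y(2) yM(1)] by blast
  moreover have "ideal a \<in> ringA (zz_range s z)"
    using rightideal_in_Aring[OF aM(1)] aM(2) by simp
  ultimately have "ideal a \<in> \<Phi> z ?W" unfolding Phi_def by blast
  then have "ideal a \<in> \<Phi> z' ?W" using agree W y(1) E(1) by auto
  then obtain E' where "y \<in> E'" "{c. \<exists>x\<in>E' \<inter> zdom z'. zmap z' x = Some c} \<subseteq> ideal a"
    unfolding Phi_def by blast
  with y(1,3) E(2) show ?thesis by blast
qed

lemma zz_map_associated_if_Phi_agree:
  assumes z: "is_zigzag M r s z" "zz_source s z = v"
    and z': "is_zigzag M r s z'" "zz_source s z' = v"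
    and E: "E \<in> ringA v" "E \<subseteq> zdom z \<inter> zdom z'"
    and agree: "\<forall>W. is_ultrafilter_in (ringA v) W \<and> E \<in> W \<longrightarrow> \<Phi> z W = \<Phi> z' W"
    and x: "x \<in> E" "zmap z x = Some a" "zmap z' x = Some b"
  shows "b \<in> ideal a \<and> a \<in> ideal b"
proof -
  have "\<forall>W. is_ultrafilter_in (ringA v) W \<and> E \<in> W \<longrightarrow> \<Phi> z' W = \<Phi> z W"
    using agree by metis
  moreover have "E \<subseteq> zdom z' \<inter> zdom z" using E(2) by blast
  ultimately show ?thesis
    using zz_map_in_rightideal_if_Phi_agree[OF z E agree x]
      zz_map_in_rightideal_if_Phi_agree[OF z' E(1) _ _ x(1,3,2)] by blast
qed

end

text \<open>Condition (2) of the theorem, with \<open>\<nu>\<close> in the role of \<open>\<mu>\<^sup>-\<^sup>1\<close>.\<close>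

definition isotropy_moves_ideals :: "'a set \<Rightarrow> ('a \<Rightarrow> 'a) \<Rightarrow> ('a \<Rightarrow> 'a) \<Rightarrow> ('a \<Rightarrow> 'a \<Rightarrow> 'a) \<Rightarrow> bool" where
  "isotropy_moves_ideals M r s cmp \<longleftrightarrow> (\<forall>v\<in>objects M r. \<forall>E\<in>Aring M r s cmp v. E \<noteq> {} \<longrightarrow>
     (\<forall>\<alpha>\<in>E. \<forall>\<mu>\<in>M. \<forall>\<nu>\<in>M.
        r \<mu> = s \<alpha> \<and> s \<mu> = s \<alpha> \<and> r \<nu> = s \<alpha> \<and> s \<nu> = s \<alpha> \<and>
        cmp \<mu> \<nu> = s \<alpha> \<and> cmp \<nu> \<mu> = s \<alpha> \<and> \<mu> \<noteq> s \<alpha> \<longrightarrow>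
        (\<exists>\<beta>\<in>M. r \<beta> = s \<alpha> \<and> cmp \<alpha> \<beta> \<in> E \<and>
           (cmp \<mu> \<beta> \<notin> rightideal M r s cmp \<beta> \<or> cmp \<nu> \<beta> \<notin> rightideal M r s cmp \<beta>))))"

context left_cancellative_category
begin

lemma zz_map_eq_if_Phi_agree:
  assumes isotropy: "isotropy_moves_ideals M r s cmp" and v: "v \<in> objects M r"
    and z: "is_zigzag M r s z" "zz_source s z = v"
    and z': "is_zigzag M r s z'" "zz_source s z' = v"
    and E: "E \<in> ringA v" "E \<subseteq> zdom z \<inter> zdom z'"
    and agree: "\<forall>W. is_ultrafilter_in (ringA v) W \<and> E \<in> W \<longrightarrow> \<Phi> z W = \<Phi> z' W"
    and y: "y \<in> E"
  shows "zmap z y = zmap z' y"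
proof (rule ccontr)
  have associated: "b \<in> ideal a \<and> a \<in> ideal b"
    if "x \<in> E" "zmap z x = Some a" "zmap z' x = Some b" for x a b
    using zz_map_associated_if_Phi_agree[OF z z' E agree that] .
  obtain a where a: "zmap z y = Some a" "a \<in> M" "s a = s y" and yM: "y \<in> M"
    using zigzag_zz_domE[OF z(1)] y E(2) by blast
  obtain b where b: "zmap z' y = Some b" "b \<in> M" "s b = s y"
    using zigzag_zz_domE[OF z'(1)] y E(2) by blast
  assume "zmap z y \<noteq> zmap z' y"
  with a b have "a \<noteq> b" by simp
  have "b \<in> ideal a" "a \<in> ideal b" and "s a = s b"
    using associated[OF y a(1) b(1)] a(3) b(3) by simp_all
  then obtain \<gamma> \<delta> where \<gamma>\<delta>: "\<gamma> \<in> M" "\<delta> \<in> M" "b = cmp a \<gamma>" "a = cmp b \<delta>"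
    "r \<gamma> = s a" "s \<gamma> = s a" "r \<delta> = s a" "s \<delta> = s a" "cmp \<gamma> \<delta> = s a" "cmp \<delta> \<gamma> = s a"
    using rightideal_associatedE[OF a(2) b(2)] by blast
  have "\<gamma> \<noteq> s a" using \<open>a \<noteq> b\<close> \<gamma>\<delta>(3) a(2) by auto
  \<comment> \<open>so \<open>\<gamma>\<close> is a nontrivial unit at \<open>s y\<close>; by the hypothesis it moves some \<open>\<beta>\<Lambda>\<close> with
      \<open>y\<beta> \<in> E\<close>, while agreement of the \<open>\<Phi>\<close>'s at \<open>y\<beta>\<close> forces \<open>\<gamma>\<beta>, \<delta>\<beta> \<in> \<beta>\<Lambda>\<close>\<close>
  have "\<exists>\<beta>\<in>M. r \<beta> = s y \<and> cmp y \<beta> \<in> E \<and> (cmp \<gamma> \<beta> \<notin> ideal \<beta> \<or> cmp \<delta> \<beta> \<notin> ideal \<beta>)"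
    using isotropy[unfolded isotropy_moves_ideals_def, rule_format, OF v E(1) _ y \<gamma>\<delta>(1,2)]
      \<open>\<gamma> \<noteq> s a\<close> \<gamma>\<delta>(5-10) a(3) y by auto
  then obtain \<beta> where \<beta>: "\<beta> \<in> M" "r \<beta> = s y" "cmp y \<beta> \<in> E"
    and moves: "cmp \<gamma> \<beta> \<notin> ideal \<beta> \<or> cmp \<delta> \<beta> \<notin> ideal \<beta>"
    by blast
  have "zmap z (cmp y \<beta>) = Some (cmp a \<beta>)" "zmap z' (cmp y \<beta>) = Some (cmp b \<beta>)"
    using zz_map_comp_right[OF a(1) zigzag_subset[OF z(1)] yM \<beta>(1,2)]
      zz_map_comp_right[OF b(1) zigzag_subset[OF z'(1)] yM \<beta>(1,2)] by simp_all
  with \<beta>(3) have ba: "cmp b \<beta> \<in> ideal (cmp a \<beta>)" and ab: "cmp a \<beta> \<in> ideal (cmp b \<beta>)"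
    using associated by blast+
  have "cmp \<gamma> \<beta> \<in> ideal \<beta>"
    using rightideal_cancel_left[OF a(2) \<gamma>\<delta>(1) \<beta>(1) _ _ _ ba[unfolded \<gamma>\<delta>(3)]]
      \<gamma>\<delta>(5,6) a(3) \<beta>(2) by simp
  moreover have "cmp \<delta> \<beta> \<in> ideal \<beta>"
    using rightideal_cancel_left[OF b(2) \<gamma>\<delta>(2) \<beta>(1) _ _ _ ab[unfolded \<gamma>\<delta>(4)]]
      \<gamma>\<delta>(7,8) \<open>s a = s b\<close> b(3) \<beta>(2) by simp
  ultimately show False using moves by blast
qed

lemma sim2_imp_sim1:
  assumes p: "p \<in> ZX M r s cmp" and q: "q \<in> ZX M r s cmp" and sim2: "sim2 M r s cmp p q"
  shows "sim1 M r s cmp p q"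
proof -
  obtain z v U z' where pq: "p = (z, (v, U))" "q = (z', (v, U))"
    using sim2 unfolding sim2_def by (cases p, cases q) auto
  have z: "is_zigzag M r s z" "is_ultrafilter_in (ringA v) U" and z': "is_zigzag M r s z'"
    using p q pq by (auto simp: ZX_def Xspace_def)
  obtain E where E: "E \<in> U" "E \<subseteq> zdom z \<inter> zdom z'" "\<forall>x\<in>E. zmap z x = zmap z' x"
    using sim2 unfolding sim2_def pq by auto
  obtain x where x: "x \<in> E"
    using ultrafilter_memberD(2)[OF z(2) E(1)] by blast
  obtain y where "zmap z x = Some y" "r y = zz_range s z"
    using zigzag_zz_domE[OF z(1)] x E(2) by blast
  moreover obtain y' where "zmap z' x = Some y'" "r y' = zz_range s z'"
    using zigzag_zz_domE[OF z'] x E(2) by blast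
  ultimately have range: "zz_range s z = zz_range s z'"
    using E(3) x by auto
  have E': "E \<subseteq> zdom z' \<inter> zdom z" "\<forall>x\<in>E. zmap z' x = zmap z x"
    using E(2,3) by auto
  have "\<Phi> z W = \<Phi> z' W" if "is_ultrafilter_in (ringA v) W" "E \<in> W" for W
  proof -
    have "is_filter_in (ringA v) W" using that(1) by (simp add: is_ultrafilter_in_def)
    then show ?thesis
      using Phi_subset_if_zz_map_agree[OF range _ that(2) E(2,3)]
        Phi_subset_if_zz_map_agree[OF range[symmetric] _ that(2) E'] by blast
  qed
  with E show ?thesis unfolding sim1_def pq by auto
qed

lemma sim1_imp_sim2:
  assumes isotropy: "isotropy_moves_ideals M r s cmp"
    and p: "p \<in> ZX M r s cmp" and q: "q \<in> ZX M r s cmp" and sim1: "sim1 M r s cmp p q"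
  shows "sim2 M r s cmp p q"
proof -
  obtain z v U z' where pq: "p = (z, (v, U))" "q = (z', (v, U))"
    using sim1 unfolding sim1_def by (cases p, cases q) auto
  have z: "is_zigzag M r s z" "zz_source s z = v" "is_ultrafilter_in (ringA v) U" "v \<in> objects M r"
    and z': "is_zigzag M r s z'" "zz_source s z' = v"
    using p q pq by (auto simp: ZX_def Xspace_def)
  obtain E where E: "E \<in> U" "E \<subseteq> zdom z \<inter> zdom z'"
    and agree: "\<forall>W. is_ultrafilter_in (ringA v) W \<and> E \<in> W \<longrightarrow> \<Phi> z W = \<Phi> z' W"
    using sim1 unfolding sim1_def pq by auto
  have "E \<in> ringA v" using ultrafilter_memberD(1)[OF z(3) E(1)] .
  then have "\<forall>x\<in>E. zmap z x = zmap z' x"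
    using zz_map_eq_if_Phi_agree[OF isotropy z(4) z(1,2) z' _ E(2) agree] by blast
  with E show ?thesis unfolding sim2_def pq by auto
qed

lemma objectsD: "v \<in> objects M r \<Longrightarrow> v \<in> M \<and> r v = v \<and> s v = v"
  unfolding objects_def by (metis (mono_tags, lifting) mem_Collect_eq s_r)

lemma zz_map_identity_zigzag:
  assumes "v \<in> objects M r"
  shows "zmap [(v, v)] x = Some y \<longleftrightarrow> x \<in> M \<and> r x = v \<and> y = x"
  using objectsD[OF assms] by (auto simp: zz_map_Cons_eq_Some comp_identity_left)

lemma zz_map_twist_zigzag:
  assumes v: "v \<in> objects M r" and \<alpha>: "\<alpha> \<in> M" "r \<alpha> = v"
    and \<mu>: "\<mu> \<in> M" "r \<mu> = s \<alpha>" "s \<mu> = s \<alpha>"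
  shows "zmap [(v, cmp \<alpha> \<mu>), (\<alpha>, v)] x = Some y \<longleftrightarrow>
    (\<exists>\<beta>\<in>M. r \<beta> = s \<alpha> \<and> x = cmp \<alpha> \<beta> \<and> y = cmp (cmp \<alpha> \<mu>) \<beta>)"
proof -
  have inner: "zmap [(\<alpha>, v)] x = Some t \<longleftrightarrow> t \<in> M \<and> r t = s \<alpha> \<and> x = cmp \<alpha> t" for t
    using objectsD[OF v] \<alpha> by (auto simp: zz_map_Cons_eq_Some comp_identity_left)
  show ?thesis
    using objectsD[OF v] \<alpha> \<mu> by (auto simp: zz_map_Cons_eq_Some inner comp_identity_left)
qed

lemma Aring_twist_iff:
  assumes F: "F \<in> ringA v" and \<alpha>: "\<alpha> \<in> M" and \<beta>: "\<beta> \<in> M" "r \<beta> = s \<alpha>"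
    and \<mu>\<nu>: "\<mu> \<in> M" "\<nu> \<in> M" "r \<mu> = s \<alpha>" "s \<mu> = s \<alpha>" "r \<nu> = s \<alpha>" "s \<nu> = s \<alpha>" "cmp \<mu> \<nu> = s \<alpha>"
    and keeps: "cmp \<mu> \<beta> \<in> ideal \<beta>" "cmp \<nu> \<beta> \<in> ideal \<beta>"
  shows "cmp (cmp \<alpha> \<mu>) \<beta> \<in> F \<longleftrightarrow> cmp \<alpha> \<beta> \<in> F"
proof -
  obtain \<gamma> where \<gamma>: "cmp \<mu> \<beta> = cmp \<beta> \<gamma>" "\<gamma> \<in> M" "r \<gamma> = s \<beta>"
    using keeps(1) by (auto simp: rightideal_def)
  obtain \<delta> where \<delta>: "cmp \<nu> \<beta> = cmp \<beta> \<delta>" "\<delta> \<in> M" "r \<delta> = s \<beta>"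
    using keeps(2) by (auto simp: rightideal_def)
  have s\<gamma>: "s \<gamma> = s \<beta>"
  proof -
    have "s \<gamma> = s (cmp \<beta> \<gamma>)" using \<beta>(1) \<gamma>(2,3) by simp
    also have "\<dots> = s (cmp \<mu> \<beta>)" by (simp add: \<gamma>(1))
    also have "\<dots> = s \<beta>" using \<beta> \<mu>\<nu>(1,4) by simp
    finally show ?thesis .
  qed
  have "cmp \<beta> (cmp \<gamma> \<delta>) = cmp (cmp \<beta> \<gamma>) \<delta>"
    using comp_assoc[OF \<beta>(1) \<gamma>(2) \<delta>(2)] \<gamma>(3) \<delta>(3) s\<gamma> by simp
  also have "\<dots> = cmp \<mu> (cmp \<beta> \<delta>)"
    using comp_assoc[OF \<mu>\<nu>(1) \<beta>(1) \<delta>(2)] \<beta>(2) \<mu>\<nu>(4) \<delta>(3) by (simp add: \<gamma>(1)[symmetric])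
  also have "\<dots> = cmp (cmp \<mu> \<nu>) \<beta>"
    using comp_assoc[OF \<mu>\<nu>(1,2) \<beta>(1)] \<beta>(2) \<mu>\<nu>(4,5,6) by (simp add: \<delta>(1)[symmetric])
  also have "\<dots> = \<beta>" using \<beta> \<mu>\<nu>(7) comp_identity_left by simp
  finally have "cmp \<gamma> \<delta> = s \<beta>"
    using comp_eq_self_imp_identity[OF \<beta>(1), of "cmp \<gamma> \<delta>"] \<gamma>(2,3) \<delta>(2,3) s\<gamma> by simp
  moreover have "cmp (cmp \<alpha> \<mu>) \<beta> = cmp (cmp \<alpha> \<beta>) \<gamma>"
    using comp_assoc[OF \<alpha> \<mu>\<nu>(1) \<beta>(1)] comp_assoc[OF \<alpha> \<beta>(1) \<gamma>(2)] \<beta>(2) \<mu>\<nu>(3,4) \<gamma>(3)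
    by (simp add: \<gamma>(1))
  ultimately show ?thesis
    using Aring_comp_right_invertible_iff[OF F, of "cmp \<alpha> \<beta>" \<gamma> \<delta>] \<alpha> \<beta> \<gamma>(2,3) \<delta>(2,3) s\<gamma> by simp
qed

lemma sim1_not_sim2_if_isotropy_fixes_ideals:
  assumes v: "v \<in> objects M r" and E: "E \<in> ringA v" "\<alpha> \<in> E"
    and \<mu>\<nu>: "\<mu> \<in> M" "\<nu> \<in> M" "r \<mu> = s \<alpha>" "s \<mu> = s \<alpha>" "r \<nu> = s \<alpha>" "s \<nu> = s \<alpha>" "cmp \<mu> \<nu> = s \<alpha>"
    and nontrivial: "\<mu> \<noteq> s \<alpha>"
    and keeps: "\<And>\<beta>. \<lbrakk>\<beta> \<in> M; r \<beta> = s \<alpha>; cmp \<alpha> \<beta> \<in> E\<rbrakk> \<Longrightarrow> cmp \<mu> \<beta> \<in> ideal \<beta> \<and> cmp \<nu> \<beta> \<in> ideal \<beta>"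
  shows "\<exists>p\<in>ZX M r s cmp. \<exists>q\<in>ZX M r s cmp. sim1 M r s cmp p q \<and> \<not> sim2 M r s cmp p q"
proof -
  have vM: "v \<in> M" "r v = v" "s v = v" using objectsD[OF v] by blast+
  have \<alpha>: "\<alpha> \<in> M" "r \<alpha> = v" using Aring_subset_rangeset[OF E(1)] E(2) by (auto simp: rangeset_def)
  define z\<^sub>1 where "z\<^sub>1 = [(v, v)]"
  define z\<^sub>2 where "z\<^sub>2 = [(v, cmp \<alpha> \<mu>), (\<alpha>, v)]"
  define U where "U = {F \<in> ringA v. \<alpha> \<in> F}"
  have z\<^sub>1: "is_zigzag M r s z\<^sub>1" "zz_source s z\<^sub>1 = v" "zz_range s z\<^sub>1 = v"
    using vM by (auto simp: z\<^sub>1_def is_zigzag_def zz_source_def zz_range_def)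
  have z\<^sub>2: "is_zigzag M r s z\<^sub>2" "zz_source s z\<^sub>2 = v" "zz_range s z\<^sub>2 = v"
    using vM \<alpha> \<mu>\<nu> by (auto simp: z\<^sub>2_def is_zigzag_def zz_source_def zz_range_def)
  have map\<^sub>1: "zmap z\<^sub>1 x = Some y \<longleftrightarrow> x \<in> M \<and> r x = v \<and> y = x" for x y
    unfolding z\<^sub>1_def using zz_map_identity_zigzag[OF v] .
  have map\<^sub>2: "zmap z\<^sub>2 x = Some y \<longleftrightarrow> (\<exists>\<beta>\<in>M. r \<beta> = s \<alpha> \<and> x = cmp \<alpha> \<beta> \<and> y = cmp (cmp \<alpha> \<mu>) \<beta>)" for x y
    unfolding z\<^sub>2_def using zz_map_twist_zigzag[OF v \<alpha> \<mu>\<nu>(1,3,4)] .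
  have "cmp (cmp \<alpha> \<mu>) (s \<alpha>) = cmp \<alpha> \<mu>"
    using comp_s_right[of "cmp \<alpha> \<mu>"] \<alpha>(1) \<mu>\<nu>(1,3,4) by simp
  then have at_\<alpha>: "zmap z\<^sub>1 \<alpha> = Some \<alpha>" "zmap z\<^sub>2 \<alpha> = Some (cmp \<alpha> \<mu>)"
    unfolding map\<^sub>1 map\<^sub>2 using \<alpha> by (auto intro!: bexI[of _ "s \<alpha>"])
  have U: "is_ultrafilter_in (ringA v) U"
    unfolding U_def using principal_ultrafilter[OF ring_of_sets_Aring E] .
  have dom\<^sub>1: "zdom z\<^sub>1 = rangeset M r v"
    using map\<^sub>1 by (auto simp: zz_dom_def rangeset_def)
  have "zdom z\<^sub>1 \<in> U" "zdom z\<^sub>2 \<in> U"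
    using zz_dom_in_Aring[OF z\<^sub>1(1)] zz_dom_in_Aring[OF z\<^sub>2(1)] z\<^sub>1(2) z\<^sub>2(2) at_\<alpha>
    unfolding U_def zz_dom_def by auto
  then have "(z\<^sub>1, (v, U)) \<in> ZX M r s cmp" "(z\<^sub>2, (v, U)) \<in> ZX M r s cmp"
    using z\<^sub>1 z\<^sub>2 v U unfolding ZX_def Xspace_def by auto
  moreover
  define E\<^sub>0 where "E\<^sub>0 = E \<inter> zdom z\<^sub>2"
  have "E\<^sub>0 \<in> ringA v"
    unfolding E\<^sub>0_def using Aring_Int[OF E(1) zz_dom_in_Aring[OF z\<^sub>2(1), unfolded z\<^sub>2(2)]] .
  then have E\<^sub>0: "E\<^sub>0 \<in> U" "E\<^sub>0 \<subseteq> zdom z\<^sub>1 \<inter> zdom z\<^sub>2"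
    using E(2) at_\<alpha> zz_dom_subset_rangeset[OF z\<^sub>2(1)] z\<^sub>2(2) dom\<^sub>1
    by (auto simp: E\<^sub>0_def U_def zz_dom_def)
  have preserved: "y \<in> F \<longleftrightarrow> x \<in> F"
    if x: "x \<in> E\<^sub>0" and y: "zmap z\<^sub>2 x = Some y" and F: "F \<in> ringA v" for x y F
  proof -
    obtain \<beta> where \<beta>: "\<beta> \<in> M" "r \<beta> = s \<alpha>" "x = cmp \<alpha> \<beta>" "y = cmp (cmp \<alpha> \<mu>) \<beta>"
      using y map\<^sub>2 by blast
    then have "cmp \<mu> \<beta> \<in> ideal \<beta> \<and> cmp \<nu> \<beta> \<in> ideal \<beta>"
      using keeps x by (auto simp: E\<^sub>0_def)
    with \<beta>(3,4) show ?thesis using Aring_twist_iff[OF F \<alpha>(1) \<beta>(1,2) \<mu>\<nu>] by simp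
  qed
  have "\<Phi> z\<^sub>1 W = W \<and> \<Phi> z\<^sub>2 W = W" if "is_ultrafilter_in (ringA v) W" "E\<^sub>0 \<in> W" for W
  proof
    have W: "is_filter_in (ringA v) W" using that(1) by (simp add: is_ultrafilter_in_def)
    show "\<Phi> z\<^sub>1 W = W"
      by (rule Phi_eq_self_if_membership_preserved[OF z\<^sub>1(3) W that(2)]) (use E\<^sub>0(2) map\<^sub>1 in auto)
    show "\<Phi> z\<^sub>2 W = W"
      by (rule Phi_eq_self_if_membership_preserved[OF z\<^sub>2(3) W that(2)]) (use E\<^sub>0(2) preserved in auto)
  qed
  then have "sim1 M r s cmp (z\<^sub>1, (v, U)) (z\<^sub>2, (v, U))"
    unfolding sim1_def prod.case using E\<^sub>0 by auto
  moreover have "\<not> sim2 M r s cmp (z\<^sub>1, (v, U)) (z\<^sub>2, (v, U))"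
  proof
    assume "sim2 M r s cmp (z\<^sub>1, (v, U)) (z\<^sub>2, (v, U))"
    then have "zmap z\<^sub>1 \<alpha> = zmap z\<^sub>2 \<alpha>" unfolding sim2_def U_def by auto
    then have "cmp \<alpha> \<mu> = \<alpha>" using at_\<alpha> by simp
    then show False using comp_eq_self_imp_identity[OF \<alpha>(1) \<mu>\<nu>(1,3)] nontrivial by simp
  qed
  ultimately show ?thesis by blast
qed

lemma sim1_not_sim2_if_not_isotropy:
  assumes "\<not> isotropy_moves_ideals M r s cmp"
  shows "\<exists>p\<in>ZX M r s cmp. \<exists>q\<in>ZX M r s cmp. sim1 M r s cmp p q \<and> \<not> sim2 M r s cmp p q"
proof -
  obtain v E \<alpha> \<mu> \<nu> where "v \<in> objects M r" "E \<in> ringA v" "\<alpha> \<in> E" "\<mu> \<in> M" "\<nu> \<in> M"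
    "r \<mu> = s \<alpha>" "s \<mu> = s \<alpha>" "r \<nu> = s \<alpha>" "s \<nu> = s \<alpha>" "cmp \<mu> \<nu> = s \<alpha>" "\<mu> \<noteq> s \<alpha>"
    "\<And>\<beta>. \<lbrakk>\<beta> \<in> M; r \<beta> = s \<alpha>; cmp \<alpha> \<beta> \<in> E\<rbrakk> \<Longrightarrow> cmp \<mu> \<beta> \<in> ideal \<beta> \<and> cmp \<nu> \<beta> \<in> ideal \<beta>"
    using assms unfolding isotropy_moves_ideals_def by blast
  then show ?thesis by (rule sim1_not_sim2_if_isotropy_fixes_ideals)
qed

end

theorem mainTheorem8:
  fixes M :: "'a set" and r s :: "'a \<Rightarrow> 'a" and cmp :: "'a \<Rightarrow> 'a \<Rightarrow> 'a"
  assumes cat: "small_category M r s cmp"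
    and lc: "left_cancellative M r s cmp"
  defines "cond1 \<equiv> (\<forall>p\<in>ZX M r s cmp. \<forall>q\<in>ZX M r s cmp.
                       sim1 M r s cmp p q \<longleftrightarrow> sim2 M r s cmp p q)"
    and "cond2 \<equiv> (\<forall>v\<in>objects M r. \<forall>E\<in>Aring M r s cmp v. E \<noteq> {} \<longrightarrow>
                   (\<forall>\<alpha>\<in>E. \<forall>\<mu>\<in>M. \<forall>\<nu>\<in>M.
                      r \<mu> = s \<alpha> \<and> s \<mu> = s \<alpha> \<and> r \<nu> = s \<alpha> \<and> s \<nu> = s \<alpha> \<and>
                      cmp \<mu> \<nu> = s \<alpha> \<and> cmp \<nu> \<mu> = s \<alpha> \<and> \<mu> \<noteq> s \<alpha> \<longrightarrow>
                      (\<exists>\<beta>\<in>M. r \<beta> = s \<alpha> \<and> cmp \<alpha> \<beta> \<in> E \<and>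
                         (cmp \<mu> \<beta> \<notin> rightideal M r s cmp \<beta> \<or>
                          cmp \<nu> \<beta> \<notin> rightideal M r s cmp \<beta>))))"
  shows "(cond2 \<longrightarrow> cond1) \<and> (right_cancellative M r s cmp \<longrightarrow> cond1 \<longrightarrow> cond2)"
proof -
  interpret left_cancellative_category M r s cmp
    using cat lc by unfold_locales
  have cond2_iff: "cond2 \<longleftrightarrow> isotropy_moves_ideals M r s cmp"
    unfolding cond2_def isotropy_moves_ideals_def by (rule refl)
  have "cond1" if "isotropy_moves_ideals M r s cmp"
    unfolding cond1_def using sim1_imp_sim2[OF that] sim2_imp_sim1 by blast
  \<comment> \<open>this direction does not need right cancellativity\<close>
  moreover have "isotropy_moves_ideals M r s cmp" if cond1
    using sim1_not_sim2_if_not_isotropy that unfolding cond1_def by blast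
  ultimately show ?thesis using cond2_iff by blast
qed

end
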